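(* Let $(X,d_X)$, $(Y,d_Y)$ and $(X\times Y,d)$ be ultrametric spaces, where $d$ is partial distance-preserving and $d_\infty\le d$ on $(X\times Y)\times(X\times Y)$. Then for all compact sets $W\subseteq X$, $Z\subseteq Y$ and every $\varepsilon>0$, $$\mathcal M_\varepsilon(W\times Z)=\mathcal M_\varepsilon(W)\cdot\mathcal M_\varepsilon(Z),\qquad \mathcal N_\varepsilon(W\times Z)=\mathcal N_\varepsilon(W)\cdot\mathcal N_\varepsilon(Z),\qquad \mathcal M_\varepsilon(W\times Z)=\mathcal N_\varepsilon(W\times Z),$$ where the quantities for $W$, $Z$, $W\times Z$ are computed in $(X,d_X)$, $(Y,d_Y)$, $(X\times Y,d)$ respectively.
   Context: $d_\infty((x_1,y_1),(x_2,y_2))=\max\{d_X(x_1,x_2),d_Y(y_1,y_2)\}$. A metric $d$ on $X\times Y$ is partial distance-preserving if $d((x_1,y),(x_2,y))=d_X(x_1,x_2)$ and $d((x,y_1),(x,y_2))=d_Y(y_1,y_2)$ for all $x,x_1,x_2\in X$, $y,y_1,y_2\in Y$. Ultrametric: $\rho(a,b)\le\max\{\rho(a,c),\rho(c,b)\}$. In a metric space $(M,\rho)$ with closed balls $B(c,r)=\{x:\rho(x,c)\le r\}$: $C$ is an $\varepsilon$-net for $V$ if $V\subseteq\bigcup_{c\in C}B(c,\varepsilon)$; $A$ is $\varepsilon$-distinguishable if $\rho(a,b)>\varepsilon$ for distinct $a,b\in A$. For totally bounded $V$, the covering number $\mathcal N_\varepsilon(V)$ is the smallest cardinality of a subset of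 $V$ that is an $\varepsilon$-net for $V$, and the packing number $\mathcal M_\varepsilon(V)$ is the maximal cardinality of an $\varepsilon$-distinguishable subset of $V$. *)

theory Defs
  imports "HOL-Analysis.Analysis"
begin

definition ultrametric :: "'a set \<Rightarrow> ('a \<Rightarrow> 'a \<Rightarrow> real) \<Rightarrow> bool" where
  "ultrametric M \<rho> \<longleftrightarrow> Metric_space M \<rho> \<and>
     (\<forall>a\<in>M. \<forall>b\<in>M. \<forall>c\<in>M. \<rho> a b \<le> max (\<rho> a c) (\<rho> c b))"

definition eps_net :: "'a set \<Rightarrow> ('a \<Rightarrow> 'a \<Rightarrow> real) \<Rightarrow> real \<Rightarrow> 'a set \<Rightarrow> 'a set \<Rightarrow> bool" where
  "eps_net M \<rho> \<epsilon> C V \<longleftrightarrow> V \<subseteq> (\<Union>c\<in>C. Metric_space.mcball M \<rho> c \<epsilon>)"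

definition eps_distinguishable :: "('a \<Rightarrow> 'a \<Rightarrow> real) \<Rightarrow> real \<Rightarrow> 'a set \<Rightarrow> bool" where
  "eps_distinguishable \<rho> \<epsilon> A \<longleftrightarrow> (\<forall>a\<in>A. \<forall>b\<in>A. a \<noteq> b \<longrightarrow> \<rho> a b > \<epsilon>)"

definition covering_number :: "'a set \<Rightarrow> ('a \<Rightarrow> 'a \<Rightarrow> real) \<Rightarrow> real \<Rightarrow> 'a set \<Rightarrow> nat" where
  "covering_number M \<rho> \<epsilon> V =
     (LEAST n. \<exists>C. C \<subseteq> V \<and> finite C \<and> card C = n \<and> eps_net M \<rho> \<epsilon> C V)"

definition packing_number :: "('a \<Rightarrow> 'a \<Rightarrow> real) \<Rightarrow> real \<Rightarrow> 'a set \<Rightarrow> nat" where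
  "packing_number \<rho> \<epsilon> V =
     (GREATEST n. \<exists>A. A \<subseteq> V \<and> finite A \<and> card A = n \<and> eps_distinguishable \<rho> \<epsilon> A)"

end

theory Submission
  imports Defs
begin

(* In an ultrametric space two points lying in a common closed
   eps-ball are at distance at most eps.  Hence, mapping each point of an
   eps-distinguishable set to the centre of a net ball containing it is
   injective, so every eps-distinguishable subset of V is at most as large as
   every eps-net for V.  A net of least cardinality is itself
   eps-distinguishable (otherwise one centre could be dropped); we call such a
   set a separated eps-net.  If V has a finite separated eps-net C, then both
   the packing and the covering number of V equal card C.
   For the theorem, compactness yields finite nets, hence separated nets CW of
   W and CZ of Z; their product CW \<times> CZ is a separated eps-net of W \<times> Z
   (net: by partial distance preservation and the ultrametric inequality;
   separated: by d_inf \<le> d), so all three numbers are computed by cardinalities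
   of CW, CZ and CW \<times> CZ. *)

definition separated_net :: "'a set \<Rightarrow> ('a \<Rightarrow> 'a \<Rightarrow> real) \<Rightarrow> real \<Rightarrow> 'a set \<Rightarrow> 'a set \<Rightarrow> bool" where
  "separated_net M \<rho> \<epsilon> C V \<longleftrightarrow>
     finite C \<and> C \<subseteq> V \<and> eps_net M \<rho> \<epsilon> C V \<and> eps_distinguishable \<rho> \<epsilon> C"

lemma ultrametric_imp_Metric_space: "ultrametric M \<rho> \<Longrightarrow> Metric_space M \<rho>"
  unfolding ultrametric_def by blast

lemma ultrametric_le_trans:
  assumes "ultrametric M \<rho>" "a \<in> M" "b \<in> M" "c \<in> M" "\<rho> a c \<le> e" "\<rho> c b \<le> e"
  shows "\<rho> a b \<le> e"
  using assms unfolding ultrametric_def by (metis max.bounded_iff order_trans)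

text \<open>Two points of one closed eps-ball are eps-close: every point of a ball is a centre.\<close>
lemma ultrametric_mcball_close:
  assumes U: "ultrametric M \<rho>"
    and "a \<in> Metric_space.mcball M \<rho> c \<epsilon>" "b \<in> Metric_space.mcball M \<rho> c \<epsilon>"
  shows "\<rho> a b \<le> \<epsilon>"
proof -
  interpret Metric_space M \<rho> using ultrametric_imp_Metric_space[OF U] .
  have in_ball: "c \<in> M" "a \<in> M" "b \<in> M" "\<rho> c a \<le> \<epsilon>" "\<rho> c b \<le> \<epsilon>"
    using assms(2,3) by auto
  then have "\<rho> a c \<le> \<epsilon>" by (simp add: commute[of a c])
  with in_ball show ?thesis using ultrametric_le_trans[OF U, of a b c] by blast
qed

lemma compactin_finite_eps_net:
  assumes "Metric_space M \<rho>" "compactin (Metric_space.mtopology M \<rho>) V" "\<epsilon> > 0"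
  shows "\<exists>C. finite C \<and> C \<subseteq> V \<and> eps_net M \<rho> \<epsilon> C V"
proof -
  interpret Metric_space M \<rho> by fact
  have "mtotally_bounded V" using compactin_imp_mtotally_bounded[OF assms(2)] .
  then obtain C where C: "finite C" "C \<subseteq> V" "V \<subseteq> (\<Union>c\<in>C. mball c \<epsilon>)"
    using assms(3) unfolding mtotally_bounded_def by (meson order_refl)
  have "V \<subseteq> (\<Union>c\<in>C. mcball c \<epsilon>)" using C(3) mball_subset_mcball by blast
  with C show ?thesis unfolding eps_net_def by blast
qed

text \<open>Key counting fact: an eps-distinguishable subset of V injects into any
  finite eps-net for V (send each point to the centre of a ball containing it).\<close>
lemma distinguishable_card_le_net:
  assumes U: "ultrametric M \<rho>" and C: "finite C" "eps_net M \<rho> \<epsilon> C V"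
    and A: "A \<subseteq> V" "eps_distinguishable \<rho> \<epsilon> A"
  shows "card A \<le> card C"
proof -
  have "\<forall>a\<in>A. \<exists>c\<in>C. a \<in> Metric_space.mcball M \<rho> c \<epsilon>"
    using A(1) C(2) unfolding eps_net_def by blast
  then obtain f where f: "\<And>a. a \<in> A \<Longrightarrow> f a \<in> C \<and> a \<in> Metric_space.mcball M \<rho> (f a) \<epsilon>"
    by metis
  have "inj_on f A"
  proof (rule inj_onI, rule ccontr)
    fix a b assume ab: "a \<in> A" "b \<in> A" "f a = f b" "a \<noteq> b"
    then have "\<rho> a b \<le> \<epsilon>" using f ultrametric_mcball_close[OF U] by metis
    then show False using A(2) ab unfolding eps_distinguishable_def by force
  qed
  moreover have "f ` A \<subseteq> C" using f by blast
  ultimately show ?thesis using C(1) card_inj_on_le by blast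
qed

text \<open>A finite eps-net of least cardinality is separated: if two centres were
  eps-close, one could be dropped (its ball lies in the other's).\<close>
lemma ex_separated_net:
  assumes U: "ultrametric M \<rho>" and ex: "\<exists>C. finite C \<and> C \<subseteq> V \<and> eps_net M \<rho> \<epsilon> C V"
  shows "\<exists>C. separated_net M \<rho> \<epsilon> C V"
proof -
  let ?net_of_size = "\<lambda>n. \<exists>C. finite C \<and> C \<subseteq> V \<and> card C = n \<and> eps_net M \<rho> \<epsilon> C V"
  obtain C where C: "finite C" "C \<subseteq> V" "card C = (LEAST n. ?net_of_size n)" "eps_net M \<rho> \<epsilon> C V"
    using LeastI_ex[of ?net_of_size] ex by blast
  have "eps_distinguishable \<rho> \<epsilon> C"
    unfolding eps_distinguishable_def
  proof (intro ballI impI, rule ccontr)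
    fix a b assume ab: "a \<in> C" "b \<in> C" "a \<noteq> b" "\<not> \<epsilon> < \<rho> a b"
    have ball_b: "Metric_space.mcball M \<rho> b \<epsilon> \<subseteq> Metric_space.mcball M \<rho> a \<epsilon>"
    proof
      interpret Metric_space M \<rho> using ultrametric_imp_Metric_space[OF U] .
      have "C \<subseteq> M" using C(2,4) unfolding eps_net_def by (auto simp: in_mcball)
      fix v assume "v \<in> mcball b \<epsilon>"
      then show "v \<in> mcball a \<epsilon>"
        using ultrametric_le_trans[OF U, of a v b] ab \<open>C \<subseteq> M\<close> by auto
    qed
    have "eps_net M \<rho> \<epsilon> (C - {b}) V"
      using C(4) ab ball_b unfolding eps_net_def by blast
    then have "(LEAST n. ?net_of_size n) \<le> card (C - {b})"
      using C by (intro Least_le) blast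
    moreover have "card (C - {b}) < card C" using card_Diff1_less[OF C(1) ab(2)] .
    ultimately show False using C(3) by simp
  qed
  with C show ?thesis unfolding separated_net_def by blast
qed

lemma separated_net_numbers:
  assumes U: "ultrametric M \<rho>" and C: "separated_net M \<rho> \<epsilon> C V"
  shows "packing_number \<rho> \<epsilon> V = card C" "covering_number M \<rho> \<epsilon> V = card C"
proof -
  note C' = C[unfolded separated_net_def]
  show "packing_number \<rho> \<epsilon> V = card C"
    unfolding packing_number_def
  proof (rule Greatest_equality)
    show "\<exists>A. A \<subseteq> V \<and> finite A \<and> card A = card C \<and> eps_distinguishable \<rho> \<epsilon> A"
      using C' by blast
    fix n assume "\<exists>A. A \<subseteq> V \<and> finite A \<and> card A = n \<and> eps_distinguishable \<rho> \<epsilon> A"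
    then show "n \<le> card C" using C' distinguishable_card_le_net[OF U] by metis
  qed
  show "covering_number M \<rho> \<epsilon> V = card C"
    unfolding covering_number_def
  proof (rule Least_equality)
    show "\<exists>D. D \<subseteq> V \<and> finite D \<and> card D = card C \<and> eps_net M \<rho> \<epsilon> D V"
      using C' by blast
    fix n assume "\<exists>D. D \<subseteq> V \<and> finite D \<and> card D = n \<and> eps_net M \<rho> \<epsilon> D V"
    then show "card C \<le> n" using C' distinguishable_card_le_net[OF U] by metis
  qed
qed

text \<open>The product of eps-nets is an eps-net when d restricts to dX and dY on
  the axis-parallel lines: go from (cw,cz) to (w,cz) and then to (w,z).\<close>
lemma product_eps_net:
  assumes U: "ultrametric (X \<times> Y) d"
    and partial_x: "\<And>x1 x2 y. x1 \<in> X \<Longrightarrow> x2 \<in> X \<Longrightarrow> y \<in> Y \<Longrightarrow> d (x1, y) (x2, y) = dX x1 x2"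
    and partial_y: "\<And>x y1 y2. x \<in> X \<Longrightarrow> y1 \<in> Y \<Longrightarrow> y2 \<in> Y \<Longrightarrow> d (x, y1) (x, y2) = dY y1 y2"
    and MX: "Metric_space X dX" and MY: "Metric_space Y dY"
    and "eps_net X dX \<epsilon> CW W" "eps_net Y dY \<epsilon> CZ Z"
  shows "eps_net (X \<times> Y) d \<epsilon> (CW \<times> CZ) (W \<times> Z)"
  unfolding eps_net_def
proof
  fix p assume "p \<in> W \<times> Z"
  then obtain w z cw cz where p: "p = (w, z)" "cw \<in> CW" "cz \<in> CZ"
    and "w \<in> Metric_space.mcball X dX cw \<epsilon>" "z \<in> Metric_space.mcball Y dY cz \<epsilon>"
    using assms(6,7) unfolding eps_net_def by blast
  then have h: "cw \<in> X" "w \<in> X" "dX cw w \<le> \<epsilon>" "cz \<in> Y" "z \<in> Y" "dY cz z \<le> \<epsilon>"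
    using Metric_space.in_mcball[OF MX] Metric_space.in_mcball[OF MY] by auto
  then have "d (cw, cz) (w, z) \<le> \<epsilon>"
    using ultrametric_le_trans[OF U, of "(cw, cz)" "(w, z)" "(w, cz)"] partial_x partial_y by auto
  then have "p \<in> Metric_space.mcball (X \<times> Y) d (cw, cz) \<epsilon>"
    using h p Metric_space.in_mcball[OF ultrametric_imp_Metric_space[OF U]] by auto
  with p show "p \<in> (\<Union>c\<in>CW \<times> CZ. Metric_space.mcball (X \<times> Y) d c \<epsilon>)" by blast
qed

text \<open>The product of eps-distinguishable sets is eps-distinguishable when d
  dominates the max-distance: distinct pairs differ in some coordinate.\<close>
lemma product_eps_distinguishable:
  assumes dinf_le: "\<And>x1 y1 x2 y2. x1 \<in> X \<Longrightarrow> y1 \<in> Y \<Longrightarrow> x2 \<in> X \<Longrightarrow> y2 \<in> Y \<Longrightarrow>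
                    max (dX x1 x2) (dY y1 y2) \<le> d (x1, y1) (x2, y2)"
    and "A \<subseteq> X" "B \<subseteq> Y" "eps_distinguishable dX \<epsilon> A" "eps_distinguishable dY \<epsilon> B"
  shows "eps_distinguishable d \<epsilon> (A \<times> B)"
  unfolding eps_distinguishable_def
proof (intro ballI impI)
  fix p q assume pq: "p \<in> A \<times> B" "q \<in> A \<times> B" "p \<noteq> q"
  then obtain a b a' b' where ab: "p = (a, b)" "q = (a', b')" "a \<in> A" "b \<in> B" "a' \<in> A" "b' \<in> B"
    by blast
  then have "\<epsilon> < dX a a' \<or> \<epsilon> < dY b b'"
    using pq(3) assms(4,5) unfolding eps_distinguishable_def by auto
  moreover have "max (dX a a') (dY b b') \<le> d p q"
    using dinf_le ab assms(2,3) by blast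
  ultimately show "\<epsilon> < d p q" by linarith
qed

theorem lemma4p2:
  fixes X :: "'a set" and Y :: "'b set"
    and dX :: "'a \<Rightarrow> 'a \<Rightarrow> real" and dY :: "'b \<Rightarrow> 'b \<Rightarrow> real"
    and d :: "'a \<times> 'b \<Rightarrow> 'a \<times> 'b \<Rightarrow> real"
    and W :: "'a set" and Z :: "'b set" and \<epsilon> :: real
  assumes "ultrametric X dX" and "ultrametric Y dY" and "ultrametric (X \<times> Y) d"
    and partial_x: "\<And>x1 x2 y. x1 \<in> X \<Longrightarrow> x2 \<in> X \<Longrightarrow> y \<in> Y \<Longrightarrow> d (x1, y) (x2, y) = dX x1 x2"
    and partial_y: "\<And>x y1 y2. x \<in> X \<Longrightarrow> y1 \<in> Y \<Longrightarrow> y2 \<in> Y \<Longrightarrow> d (x, y1) (x, y2) = dY y1 y2"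
    and dinf_le: "\<And>x1 y1 x2 y2. x1 \<in> X \<Longrightarrow> y1 \<in> Y \<Longrightarrow> x2 \<in> X \<Longrightarrow> y2 \<in> Y \<Longrightarrow>
                    max (dX x1 x2) (dY y1 y2) \<le> d (x1, y1) (x2, y2)"
    and "W \<subseteq> X" and "compactin (Metric_space.mtopology X dX) W"
    and "Z \<subseteq> Y" and "compactin (Metric_space.mtopology Y dY) Z"
    and "\<epsilon> > 0"
  shows "packing_number d \<epsilon> (W \<times> Z) = packing_number dX \<epsilon> W * packing_number dY \<epsilon> Z \<and>
         covering_number (X \<times> Y) d \<epsilon> (W \<times> Z) =
           covering_number X dX \<epsilon> W * covering_number Y dY \<epsilon> Z \<and>
         packing_number d \<epsilon> (W \<times> Z) = covering_number (X \<times> Y) d \<epsilon> (W \<times> Z)"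
proof -
  note MX = ultrametric_imp_Metric_space[OF assms(1)]
  note MY = ultrametric_imp_Metric_space[OF assms(2)]
  obtain CW where CW: "separated_net X dX \<epsilon> CW W"
    using ex_separated_net[OF assms(1) compactin_finite_eps_net[OF MX assms(8,11)]] by blast
  obtain CZ where CZ: "separated_net Y dY \<epsilon> CZ Z"
    using ex_separated_net[OF assms(2) compactin_finite_eps_net[OF MY assms(10,11)]] by blast
  have "separated_net (X \<times> Y) d \<epsilon> (CW \<times> CZ) (W \<times> Z)"
    unfolding separated_net_def
  proof (intro conjI)
    show "finite (CW \<times> CZ)" "CW \<times> CZ \<subseteq> W \<times> Z"
      using CW CZ unfolding separated_net_def by auto
    show "eps_net (X \<times> Y) d \<epsilon> (CW \<times> CZ) (W \<times> Z)"
      by (rule product_eps_net[where dX = dX and dY = dY])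
        (use assms(3) partial_x partial_y MX MY CW CZ in \<open>simp_all add: separated_net_def\<close>)
    show "eps_distinguishable d \<epsilon> (CW \<times> CZ)"
      by (rule product_eps_distinguishable[where X = X and Y = Y and dX = dX and dY = dY])
        (use dinf_le CW CZ assms(7,9) in \<open>auto simp: separated_net_def\<close>)
  qed
  then show ?thesis
    using separated_net_numbers[OF assms(1) CW] separated_net_numbers[OF assms(2) CZ]
      separated_net_numbers[OF assms(3)] by (simp add: card_cartesian_product)
qed

end
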